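(* Let $R$, $G$, $*$, $\sigma$ and $\mathcal{S}$ be as in the context, and suppose $\mathcal{S}$ is anticommutative. For $x\in G$ put $c_x=x^*x^{-1}$. Then: - for every $x\in G$, $x^*=c_x x$, with $c_x\in G_*\cap\mathcal{Z}(G)$ and $c_x^2=1$; - for all $x,y\in G$, $c_{xy}=c_xc_y(x,y)$; - if $(x,y)\neq 1$, then $c_{xy}\in\{c_x,\ c_y,\ (x,y)\}$.
   Context: Throughout, $R$ is a commutative ring with unity with $\operatorname{char}(R)\neq 2$, and $\mathcal{U}(R)$ is its unit group. $G$ is a group with an involution $*$, i.e. a map $x\mapsto x^*$ with $(xy)^*=y^*x^*$ and $(x^* )^*=x$. The map $\sigma:G\to\mathcal{U}(R)$ is a nontrivial group homomorphism with kernel $N=\ker\sigma$, and it is compatible with $*$: $xx^*\in N$ for all $x\in G$. The group ring $RG$ carries the involution $\left(\sum_{x\in G}\alpha_x x\right)^{\sigma*}=\sum_{x\in G}\sigma(x)\alpha_x x^*$. Write $G_*=\{x\in G: x^*=x\}$ and $N_*=G_*\cap N$. Let $\mathcal{S}$ be the $R$-submodule of $RG$ spanned by the union of the following three sets: - $2\mathcal{S}_1=\{2x: x\in N_*\}$; - $\mathcal{S}_2=\{\alpha x: x\in G_*\setminus N,\ \alpha\in R,\ \alpha(1-\sigma(x))=0\}$; - $\mathcal{S}_3=\{x+\sigma(x)x^*: x\in G\setminus G_*\}$. $\mathcal{S}$ is called anticommutative if $ab+ba=0$ for all $a,b\in\mathcal{S}$. $\mathcal{Z}(G)$ is the center of $G$,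 and the commutator is $(x,y)=x^{-1}y^{-1}xy$. *)

theory Defs
  imports "HOL-Algebra.Group"
begin

text \<open>Group ring elements of R G are modelled as finitely supported functions
  'g => 'r (supported in carrier G). Basis element x is the function delta x.\<close>

definition gdelta :: "'g \<Rightarrow> 'r::comm_ring_1 \<Rightarrow> ('g \<Rightarrow> 'r)" where
  "gdelta x a = (\<lambda>z. if z = x then a else 0)"

definition gsupp :: "('g \<Rightarrow> 'r::zero) \<Rightarrow> 'g set" where
  "gsupp f = {x. f x \<noteq> 0}"

definition gmult :: "('g, 'b) monoid_scheme \<Rightarrow> ('g \<Rightarrow> 'r::comm_ring_1) \<Rightarrow> ('g \<Rightarrow> 'r) \<Rightarrow> ('g \<Rightarrow> 'r)" where
  "gmult G f h = (\<lambda>z. \<Sum>x\<in>gsupp f. \<Sum>y\<in>gsupp h. if x \<otimes>\<^bsub>G\<^esub> y = z then f x * h y else 0)"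

definition sym_elems :: "('g, 'b) monoid_scheme \<Rightarrow> ('g \<Rightarrow> 'g) \<Rightarrow> 'g set" where
  "sym_elems G star = {x \<in> carrier G. star x = x}"

definition sigma_kernel :: "('g, 'b) monoid_scheme \<Rightarrow> ('g \<Rightarrow> 'r::comm_ring_1) \<Rightarrow> 'g set" where
  "sigma_kernel G \<sigma> = {x \<in> carrier G. \<sigma> x = 1}"

definition S_gens :: "('g, 'b) monoid_scheme \<Rightarrow> ('g \<Rightarrow> 'g) \<Rightarrow> ('g \<Rightarrow> 'r::comm_ring_1) \<Rightarrow> ('g \<Rightarrow> 'r) set" where
  "S_gens G star \<sigma> =
     {gdelta x 2 | x. x \<in> sym_elems G star \<inter> sigma_kernel G \<sigma>}
   \<union> {gdelta x \<alpha> | x \<alpha>. x \<in> sym_elems G star - sigma_kernel G \<sigma> \<and> \<alpha> * (1 - \<sigma> x) = 0}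
   \<union> {(\<lambda>z. gdelta x 1 z + gdelta (star x) (\<sigma> x) z) | x. x \<in> carrier G - sym_elems G star}"

inductive_set rspan :: "('g \<Rightarrow> 'r::comm_ring_1) set \<Rightarrow> ('g \<Rightarrow> 'r) set" for A where
  zero: "(\<lambda>_. 0) \<in> rspan A"
| step: "f \<in> rspan A \<Longrightarrow> b \<in> A \<Longrightarrow> (\<lambda>z. f z + r * b z) \<in> rspan A"

definition S_module :: "('g, 'b) monoid_scheme \<Rightarrow> ('g \<Rightarrow> 'g) \<Rightarrow> ('g \<Rightarrow> 'r::comm_ring_1) \<Rightarrow> ('g \<Rightarrow> 'r) set" where
  "S_module G star \<sigma> = rspan (S_gens G star \<sigma>)"

definition anticommutative :: "('g, 'b) monoid_scheme \<Rightarrow> ('g \<Rightarrow> 'r::comm_ring_1) set \<Rightarrow> bool" where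
  "anticommutative G S \<longleftrightarrow> (\<forall>a\<in>S. \<forall>b\<in>S. (\<lambda>z. gmult G a b z + gmult G b a z) = (\<lambda>_. 0))"

definition group_center :: "('g, 'b) monoid_scheme \<Rightarrow> 'g set" where
  "group_center G = {z \<in> carrier G. \<forall>y\<in>carrier G. z \<otimes>\<^bsub>G\<^esub> y = y \<otimes>\<^bsub>G\<^esub> z}"

definition gcomm :: "('g, 'b) monoid_scheme \<Rightarrow> 'g \<Rightarrow> 'g \<Rightarrow> 'g" where
  "gcomm G x y = inv\<^bsub>G\<^esub> x \<otimes>\<^bsub>G\<^esub> inv\<^bsub>G\<^esub> y \<otimes>\<^bsub>G\<^esub> x \<otimes>\<^bsub>G\<^esub> y"

end

theory Submission
  imports Defs
begin

text \<open>
  Write c_x = x* x^-1 (\<open>twist x\<close> below). Everything comes from comparing coefficients: for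
  a, b \<in> S the coefficient of ab + ba vanishes at every group element, and char R \<noteq> 2 makes
  u + u \<noteq> 0 for every unit u. For non-symmetric x the element x + \<sigma>(x)x* of S anticommutes with
  itself, which forces x x* = x* x and x^2 = x*^2; hence c_x commutes with x and is a symmetric
  involution. For non-symmetric x, y with c_x \<noteq> c_y the four products in
  (x + \<sigma>(x)x*)(y + \<sigma>(y)y*) are pairwise distinct, and so are those of the reverse product, so each
  term of one product cancels against exactly one term of the other. Running through the possible
  matchings shows that c_x commutes with y unless \<sigma>(x) = -1 and \<sigma>(y) = 1; then xy or yx is
  non-symmetric with \<sigma> = -1, and c_x commutes with that product instead. Symmetric y reduce to
  these cases through xy and yx. Centrality of c_x turns (xy)* = y* x* into
  c_xy = c_x c_y (x,y). The trichotomy is the same matching at the coefficient of xy; when xy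
  is symmetric with \<sigma>(xy) = -1, the element 2xy lies in S because 2 \<cdot> 1 \<in> S already gives 4 = 0.
\<close>

lemma two_neq_zero_if_CHAR_neq_2:
  assumes "CHAR('r::comm_ring_1) \<noteq> 2" and "(1::'r) \<noteq> 0"
  shows "(2::'r) \<noteq> 0"
proof
  assume "(2::'r) = 0"
  then have dvd: "CHAR('r) dvd 2"
    using of_nat_eq_0_iff_char_dvd[of 2, where ?'a='r] by simp
  have "CHAR('r) \<noteq> 1"
    using assms(2) of_nat_CHAR[where ?'a='r] by auto
  moreover have "CHAR('r) \<noteq> 0"
    using dvd by (metis dvd_0_left_iff zero_neq_numeral)
  moreover have "CHAR('r) \<le> 2"
    using dvd by (simp add: dvd_imp_le)
  ultimately show False
    using assms(1) by linarith
qed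

lemma unit_mult_left_cancel_comm_ring:
  fixes u :: "'a::comm_ring_1"
  assumes "u dvd 1" and "u * a = u * b"
  shows "a = b"
  using assms by (metis dvd_def mult.assoc mult.commute mult_1)

lemma unit_add_mult_eq_0_iff:
  fixes u :: "'a::comm_ring_1"
  assumes "u dvd 1"
  shows "u + u * v = 0 \<longleftrightarrow> v = -1"
proof
  assume "u + u * v = 0"
  then have "u * (1 + v) = u * 0"
    by (simp add: distrib_left)
  then have "1 + v = 0"
    using unit_mult_left_cancel_comm_ring[OF assms] by blast
  then show "v = -1"
    by (simp add: add_eq_0_iff)
qed simp

lemma gmult_eq_sum_over_supersets:
  fixes f h :: "'g \<Rightarrow> 'r::comm_ring_1"
  assumes "finite A" "finite B" "gsupp f \<subseteq> A" "gsupp h \<subseteq> B"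
  shows "gmult G f h z = (\<Sum>x\<in>A. \<Sum>y\<in>B. if x \<otimes>\<^bsub>G\<^esub> y = z then f x * h y else 0)"
proof -
  have "gmult G f h z = (\<Sum>x\<in>gsupp f. \<Sum>y\<in>B. if x \<otimes>\<^bsub>G\<^esub> y = z then f x * h y else 0)"
    unfolding gmult_def using assms finite_subset
    by (intro sum.cong refl sum.mono_neutral_left) (auto simp: gsupp_def)
  also have "\<dots> = (\<Sum>x\<in>A. \<Sum>y\<in>B. if x \<otimes>\<^bsub>G\<^esub> y = z then f x * h y else 0)"
    using assms by (intro sum.mono_neutral_left) (auto simp: gsupp_def split: if_splits intro!: sum.neutral)
  finally show ?thesis .
qed

lemma rspan_base: "b \<in> A \<Longrightarrow> b \<in> rspan A"
  using rspan.step[OF rspan.zero, of b A 1] by simp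

context group
begin

lemma left_factor_of_eqs:
  assumes "a \<in> carrier G" "a' \<in> carrier G" "b \<in> carrier G" "c \<in> carrier G"
    "w \<in> carrier G" "x \<in> carrier G"
    and "a \<otimes> w = x \<otimes> b" and "a' \<otimes> w = c \<otimes> x \<otimes> b"
  shows "a' = c \<otimes> a"
proof -
  have "a' \<otimes> w = c \<otimes> (x \<otimes> b)"
    using assms(4,6,3,8) by (simp add: m_assoc)
  also have "\<dots> = (c \<otimes> a) \<otimes> w"
    using assms(1,4,5,7) by (simp add: m_assoc)
  finally show ?thesis
    using assms(1,2,4,5) by simp
qed

lemma commute_of_eqs:
  assumes "a \<in> carrier G" "b \<in> carrier G" "c \<in> carrier G" "x \<in> carrier G"
    and "a \<otimes> x = x \<otimes> b" and "a \<otimes> (c \<otimes> x) = c \<otimes> x \<otimes> b"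
  shows "a \<otimes> c = c \<otimes> a"
  using left_factor_of_eqs[of a "a \<otimes> c" b c x x] assms by (simp add: m_assoc)

lemma commute_of_twisted_eqs:
  assumes "a \<in> carrier G" "b \<in> carrier G" "c \<in> carrier G" "x \<in> carrier G"
    and "c \<otimes> c = \<one>" and "a \<otimes> (c \<otimes> x) = x \<otimes> b" and "a \<otimes> x = c \<otimes> x \<otimes> b"
  shows "a \<otimes> c = c \<otimes> a"
proof -
  have "(a \<otimes> c) \<otimes> (c \<otimes> x) = a \<otimes> ((c \<otimes> c) \<otimes> x)"
    using assms(1-4) by (simp add: m_assoc)
  also have "\<dots> = c \<otimes> x \<otimes> b"
    using assms(1,4,5,7) by simp
  finally show ?thesis
    using left_factor_of_eqs[of a "a \<otimes> c" b c "c \<otimes> x" x] assms by simp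
qed

lemma commute_of_commute_mult_left:
  assumes "c \<in> carrier G" "x \<in> carrier G" "y \<in> carrier G"
    and "c \<otimes> x = x \<otimes> c" and "c \<otimes> (x \<otimes> y) = x \<otimes> y \<otimes> c"
  shows "c \<otimes> y = y \<otimes> c"
proof -
  have "x \<otimes> (c \<otimes> y) = c \<otimes> (x \<otimes> y)"
    using assms(1-4) by (simp add: m_assoc[symmetric])
  also have "\<dots> = x \<otimes> (y \<otimes> c)"
    using assms(1-3,5) by (simp add: m_assoc)
  finally show ?thesis
    using assms(1-3) by simp
qed

lemma commute_of_commute_mult_right:
  assumes "c \<in> carrier G" "x \<in> carrier G" "y \<in> carrier G"
    and "c \<otimes> x = x \<otimes> c" and "c \<otimes> (y \<otimes> x) = y \<otimes> x \<otimes> c"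
  shows "c \<otimes> y = y \<otimes> c"
proof -
  have "(c \<otimes> y) \<otimes> x = (y \<otimes> x) \<otimes> c"
    using assms(1-3,5) by (simp add: m_assoc)
  also have "\<dots> = (y \<otimes> c) \<otimes> x"
    using assms(1-4) by (simp add: m_assoc)
  finally show ?thesis
    using assms(1-3) by simp
qed

lemma mult_inv_cancel [simp]: "x \<in> carrier G \<Longrightarrow> y \<in> carrier G \<Longrightarrow> x \<otimes> (inv x \<otimes> y) = y"
  by (simp add: m_assoc[symmetric])

lemma inv_mult_cancel [simp]: "x \<in> carrier G \<Longrightarrow> y \<in> carrier G \<Longrightarrow> inv x \<otimes> (x \<otimes> y) = y"
  by (simp add: m_assoc[symmetric])

lemma gcomm_closed [simp]: "x \<in> carrier G \<Longrightarrow> y \<in> carrier G \<Longrightarrow> gcomm G x y \<in> carrier G"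
  by (simp add: gcomm_def)

lemma mult_gcomm: "x \<in> carrier G \<Longrightarrow> y \<in> carrier G \<Longrightarrow> y \<otimes> x \<otimes> gcomm G x y = x \<otimes> y"
  by (simp add: gcomm_def m_assoc)

lemma gcomm_eq_one_iff:
  assumes "x \<in> carrier G" "y \<in> carrier G"
  shows "gcomm G x y = \<one> \<longleftrightarrow> x \<otimes> y = y \<otimes> x"
  using mult_gcomm[OF assms] l_cancel_one[of "y \<otimes> x" "gcomm G x y"] assms by auto

lemma gcomm_eqI:
  "x \<in> carrier G \<Longrightarrow> y \<in> carrier G \<Longrightarrow> w \<in> carrier G \<Longrightarrow> y \<otimes> x \<otimes> w = x \<otimes> y \<Longrightarrow> gcomm G x y = w"
proof -
  assume car: "x \<in> carrier G" "y \<in> carrier G" "w \<in> carrier G" and "y \<otimes> x \<otimes> w = x \<otimes> y"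
  then have "y \<otimes> x \<otimes> gcomm G x y = y \<otimes> x \<otimes> w"
    by (simp add: mult_gcomm)
  then show ?thesis
    using car by simp
qed

lemma group_center_commute: "z \<in> group_center G \<Longrightarrow> y \<in> carrier G \<Longrightarrow> z \<otimes> y = y \<otimes> z"
  by (simp add: group_center_def)

lemma group_center_closed: "z \<in> group_center G \<Longrightarrow> z \<in> carrier G"
  by (simp add: group_center_def)

lemma group_center_mult:
  assumes "a \<in> group_center G" "b \<in> group_center G"
  shows "a \<otimes> b \<in> group_center G"
proof -
  have car: "a \<in> carrier G" "b \<in> carrier G"
    using assms group_center_closed by auto
  have "a \<otimes> b \<otimes> y = y \<otimes> (a \<otimes> b)" if y: "y \<in> carrier G" for y
  proof -
    have "a \<otimes> b \<otimes> y = a \<otimes> (y \<otimes> b)"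
      using car y group_center_commute[OF assms(2) y] by (simp add: m_assoc)
    also have "\<dots> = y \<otimes> (a \<otimes> b)"
      using car y group_center_commute[OF assms(1) y] by (simp add: m_assoc[symmetric])
    finally show ?thesis .
  qed
  then show ?thesis
    using car by (simp add: group_center_def)
qed

lemma central_involution_mult:
  assumes "a \<in> group_center G" "b \<in> group_center G" "a \<otimes> a = \<one>" "b \<otimes> b = \<one>"
  shows "(a \<otimes> b) \<otimes> (a \<otimes> b) = \<one>"
proof -
  have car: "a \<in> carrier G" "b \<in> carrier G"
    using assms group_center_closed by auto
  have "(a \<otimes> b) \<otimes> (a \<otimes> b) = a \<otimes> (b \<otimes> a) \<otimes> b"
    using car by (simp add: m_assoc)
  also have "\<dots> = (a \<otimes> a) \<otimes> (b \<otimes> b)"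
    using car group_center_commute[OF assms(2), of a] by (simp add: m_assoc)
  also have "\<dots> = \<one>"
    using assms(3,4) by simp
  finally show ?thesis .
qed

end

locale group_involution = group G for G :: "('g, 'b) monoid_scheme" (structure) +
  fixes star :: "'g \<Rightarrow> 'g"
  assumes star_closed [simp]: "x \<in> carrier G \<Longrightarrow> star x \<in> carrier G"
    and star_mult: "x \<in> carrier G \<Longrightarrow> y \<in> carrier G \<Longrightarrow> star (x \<otimes> y) = star y \<otimes> star x"
    and star_star [simp]: "x \<in> carrier G \<Longrightarrow> star (star x) = x"
begin

lemma star_one [simp]: "star \<one> = \<one>"
proof -
  have "star \<one> \<otimes> star \<one> = star \<one>"
    using star_mult[of \<one> \<one>] by simp
  then show ?thesis
    by simp
qed

lemma star_inv:
  assumes x: "x \<in> carrier G"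
  shows "star (inv x) = inv (star x)"
proof -
  have "star (inv x) \<otimes> star x = \<one>"
    using star_mult[of x "inv x"] x by simp
  then have "inv (star x) = star (inv x)"
    by (rule inv_equality) (simp_all add: x)
  then show ?thesis ..
qed

lemma star_inv_eq_iff: "y \<in> carrier G \<Longrightarrow> star (inv y) = inv y \<longleftrightarrow> star y = y"
  by (metis star_inv inv_inv star_closed)

definition twist :: "'g \<Rightarrow> 'g" where
  "twist x = star x \<otimes> inv x"

lemma twist_closed [simp]: "x \<in> carrier G \<Longrightarrow> twist x \<in> carrier G"
  by (simp add: twist_def)

lemma twist_mult: "x \<in> carrier G \<Longrightarrow> twist x \<otimes> x = star x"
  by (simp add: twist_def m_assoc)

lemma twist_eq_one_iff: "x \<in> carrier G \<Longrightarrow> twist x = \<one> \<longleftrightarrow> star x = x"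
  using twist_mult[of x] r_cancel_one[of x "twist x"] by auto

end

locale anticommutative_S = group_involution G star for G :: "('g, 'b) monoid_scheme" (structure) and star +
  fixes \<sigma> :: "'g \<Rightarrow> 'r::comm_ring_1"
  assumes two_neq_zero: "(2::'r) \<noteq> 0"
    and sigma_mult: "x \<in> carrier G \<Longrightarrow> y \<in> carrier G \<Longrightarrow> \<sigma> (x \<otimes> y) = \<sigma> x * \<sigma> y"
    and sigma_unit: "x \<in> carrier G \<Longrightarrow> \<sigma> x dvd 1"
    and anticomm: "anticommutative G (S_module G star \<sigma>)"
begin

lemma one_neq_zero: "(1::'r) \<noteq> 0"
proof
  assume "(1::'r) = 0"
  then have "(2::'r) * 1 = 0"
    by (simp only: mult_zero_right)
  then show False
    using two_neq_zero by simp
qed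

lemma unit_neq_zero: "(u::'r) dvd 1 \<Longrightarrow> u \<noteq> 0"
  using one_neq_zero by auto

lemma unit_double_neq_zero: "(u::'r) dvd 1 \<Longrightarrow> u + u \<noteq> 0"
proof
  assume u: "u dvd 1" and "u + u = 0"
  then have "u * 2 = u * 0"
    by (simp add: mult_2_right)
  then have "(2::'r) = 0"
    using unit_mult_left_cancel_comm_ring[OF u] by blast
  then show False
    using two_neq_zero by simp
qed

lemma minus_one_neq_one: "-1 \<noteq> (1::'r)"
proof
  assume "-1 = (1::'r)"
  then have "(2::'r) = 1 - (-1)"
    by simp
  then show False
    using two_neq_zero \<open>-1 = 1\<close> by simp
qed

lemma sigma_one: "\<sigma> \<one> = 1"
  using sigma_mult[of \<one> \<one>] unit_mult_left_cancel_comm_ring[OF sigma_unit[OF one_closed], of "\<sigma> \<one>" 1]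
  by simp

definition star_sum :: "'g \<Rightarrow> 'g \<Rightarrow> 'r" where
  "star_sum x = (\<lambda>z. gdelta x 1 z + gdelta (star x) (\<sigma> x) z)"

lemma star_sum_in_S: "x \<in> carrier G \<Longrightarrow> star x \<noteq> x \<Longrightarrow> star_sum x \<in> S_module G star \<sigma>"
  unfolding S_module_def star_sum_def
  by (rule rspan_base) (auto simp: S_gens_def sym_elems_def)

lemma double_delta_in_S:
  assumes "z \<in> carrier G" "star z = z" "2 * (1 - \<sigma> z) = 0"
  shows "gdelta z 2 \<in> S_module G star \<sigma>"
proof -
  have "gdelta z 2 \<in> S_gens G star \<sigma>"
    using assms unfolding S_gens_def sym_elems_def sigma_kernel_def by blast
  then show ?thesis
    unfolding S_module_def by (rule rspan_base)
qed

lemma S_anticomm: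
  "a \<in> S_module G star \<sigma> \<Longrightarrow> b \<in> S_module G star \<sigma> \<Longrightarrow> gmult G a b z + gmult G b a z = 0"
  using anticomm unfolding anticommutative_def by metis

lemma gmult_star_sum_star_sum:
  assumes "star x \<noteq> x" "star y \<noteq> y"
  shows "gmult G (star_sum x) (star_sum y) z =
    (if x \<otimes> y = z then 1 else 0) + (if x \<otimes> star y = z then \<sigma> y else 0)
    + (if star x \<otimes> y = z then \<sigma> x else 0) + (if star x \<otimes> star y = z then \<sigma> x * \<sigma> y else 0)"
proof -
  have "gmult G (star_sum x) (star_sum y) z =
    (\<Sum>a\<in>{x, star x}. \<Sum>b\<in>{y, star y}. if a \<otimes> b = z then star_sum x a * star_sum y b else 0)"
    by (rule gmult_eq_sum_over_supersets) (auto simp: gsupp_def star_sum_def gdelta_def)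
  then show ?thesis
    using assms not_sym[OF assms(1)] not_sym[OF assms(2)] by (simp add: star_sum_def gdelta_def)
qed

lemma gmult_gdelta_star_sum:
  assumes "star y \<noteq> y"
  shows "gmult G (gdelta a \<alpha>) (star_sum y) z =
    (if a \<otimes> y = z then \<alpha> else 0) + (if a \<otimes> star y = z then \<alpha> * \<sigma> y else 0)"
proof -
  have "gmult G (gdelta a \<alpha>) (star_sum y) z =
    (\<Sum>u\<in>{a}. \<Sum>b\<in>{y, star y}. if u \<otimes> b = z then gdelta a \<alpha> u * star_sum y b else 0)"
    by (rule gmult_eq_sum_over_supersets) (auto simp: gsupp_def star_sum_def gdelta_def)
  then show ?thesis
    using assms not_sym[OF assms] by (simp add: star_sum_def gdelta_def)
qed

lemma gmult_star_sum_gdelta: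
  assumes "star y \<noteq> y"
  shows "gmult G (star_sum y) (gdelta a \<alpha>) z =
    (if y \<otimes> a = z then \<alpha> else 0) + (if star y \<otimes> a = z then \<sigma> y * \<alpha> else 0)"
proof -
  have "gmult G (star_sum y) (gdelta a \<alpha>) z =
    (\<Sum>b\<in>{y, star y}. \<Sum>u\<in>{a}. if b \<otimes> u = z then star_sum y b * gdelta a \<alpha> u else 0)"
    by (rule gmult_eq_sum_over_supersets) (auto simp: gsupp_def star_sum_def gdelta_def)
  then show ?thesis
    using assms not_sym[OF assms] by (simp add: star_sum_def gdelta_def)
qed

lemma four_eq_zero:
  assumes "x \<in> carrier G" "star x \<noteq> x"
  shows "(2::'r) + 2 = 0"
proof -
  have "gdelta \<one> 2 \<in> S_module G star \<sigma>"
    by (rule double_delta_in_S) (simp_all add: sigma_one)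
  then have "gmult G (gdelta \<one> 2) (star_sum x) x + gmult G (star_sum x) (gdelta \<one> 2) x = 0"
    using S_anticomm star_sum_in_S[OF assms] by blast
  then show ?thesis
    using assms by (simp add: gmult_gdelta_star_sum gmult_star_sum_gdelta)
qed

lemma sym_commute_or_star_commute:
  assumes x: "x \<in> carrier G" "star x \<noteq> x" and z: "z \<in> carrier G" "star z = z"
    and "2 * (1 - \<sigma> z) = 0"
  shows "x \<otimes> z = z \<otimes> x \<or> star x \<otimes> z = z \<otimes> x"
proof -
  have "gmult G (gdelta z 2) (star_sum x) (z \<otimes> x) + gmult G (star_sum x) (gdelta z 2) (z \<otimes> x) = 0"
    using S_anticomm[OF double_delta_in_S[OF z assms(5)] star_sum_in_S[OF x]] .
  moreover have "z \<otimes> star x \<noteq> z \<otimes> x"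
    using x z by simp
  ultimately show ?thesis
    using x two_neq_zero by (auto simp: gmult_gdelta_star_sum gmult_star_sum_gdelta split: if_splits)
qed

lemma nonsym_star_commute_and_square:
  assumes x: "x \<in> carrier G" "star x \<noteq> x"
  shows "x \<otimes> star x = star x \<otimes> x" and "x \<otimes> x = star x \<otimes> star x"
proof -
  have balance: "gmult G (star_sum x) (star_sum x) z + gmult G (star_sum x) (star_sum x) z = 0" for z
    using S_anticomm[OF star_sum_in_S[OF x] star_sum_in_S[OF x]] .
  have ne: "x \<otimes> x \<noteq> x \<otimes> star x" "x \<otimes> x \<noteq> star x \<otimes> x"
    "x \<otimes> star x \<noteq> star x \<otimes> star x"
    using x by auto
  show "x \<otimes> star x = star x \<otimes> x"
  proof (rule ccontr)
    assume "x \<otimes> star x \<noteq> star x \<otimes> x"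
    then have "gmult G (star_sum x) (star_sum x) (x \<otimes> star x) = \<sigma> x"
      using x ne by (simp add: gmult_star_sum_star_sum)
    then show False
      using balance[of "x \<otimes> star x"] unit_double_neq_zero[OF sigma_unit[OF x(1)]] by simp
  qed
  show "x \<otimes> x = star x \<otimes> star x"
  proof (rule ccontr)
    assume "x \<otimes> x \<noteq> star x \<otimes> star x"
    then have "gmult G (star_sum x) (star_sum x) (x \<otimes> x) = 1"
      using x ne by (simp add: gmult_star_sum_star_sum)
    then show False
      using balance[of "x \<otimes> x"] two_neq_zero by simp
  qed
qed

lemma star_commute: "x \<in> carrier G \<Longrightarrow> x \<otimes> star x = star x \<otimes> x"
  by (cases "star x = x") (simp_all add: nonsym_star_commute_and_square(1))

lemma square_star: "x \<in> carrier G \<Longrightarrow> x \<otimes> x = star x \<otimes> star x"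
  by (cases "star x = x") (simp, rule nonsym_star_commute_and_square(2))

lemma mult_twist: "x \<in> carrier G \<Longrightarrow> x \<otimes> twist x = star x"
proof -
  assume x: "x \<in> carrier G"
  have "x \<otimes> twist x = (x \<otimes> star x) \<otimes> inv x"
    using x by (simp add: twist_def m_assoc)
  also have "\<dots> = star x"
    using x star_commute[OF x] by (simp add: m_assoc)
  finally show ?thesis .
qed

lemma twist_commute_self: "x \<in> carrier G \<Longrightarrow> twist x \<otimes> x = x \<otimes> twist x"
  by (simp add: twist_mult mult_twist)

lemma twist_eq_inv_mult:
  assumes x: "x \<in> carrier G"
  shows "twist x = inv x \<otimes> star x"
proof -
  have "twist x = inv x \<otimes> (x \<otimes> twist x)"
    using x by simp
  then show ?thesis
    using x by (simp only: mult_twist)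
qed

lemma twist_involution:
  assumes x: "x \<in> carrier G"
  shows "twist x \<otimes> twist x = \<one>"
proof -
  have "(twist x \<otimes> twist x) \<otimes> (x \<otimes> x) = twist x \<otimes> ((twist x \<otimes> x) \<otimes> x)"
    using x by (simp add: m_assoc)
  also have "\<dots> = twist x \<otimes> (star x \<otimes> x)"
    using x by (simp add: twist_mult)
  also have "\<dots> = (twist x \<otimes> x) \<otimes> star x"
    using x by (simp add: m_assoc star_commute[OF x])
  also have "\<dots> = x \<otimes> x"
    using x by (simp add: twist_mult square_star[OF x, symmetric])
  finally show ?thesis
    using x by simp
qed

lemma inv_twist: "x \<in> carrier G \<Longrightarrow> inv (twist x) = twist x"
  by (rule inv_equality) (simp_all add: twist_involution)

lemma star_twist: "x \<in> carrier G \<Longrightarrow> star (twist x) = twist x"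
proof -
  assume x: "x \<in> carrier G"
  have "star (twist x) = inv (star x) \<otimes> x"
    using x by (simp add: twist_def star_mult star_inv)
  also have "\<dots> = inv (twist x)"
    using x by (simp add: twist_eq_inv_mult inv_mult_group)
  finally show ?thesis
    using x by (simp add: inv_twist)
qed


lemma mult_eq_star_mult_iff:
  "x \<in> carrier G \<Longrightarrow> u \<in> carrier G \<Longrightarrow> v \<in> carrier G \<Longrightarrow>
    x \<otimes> u = star x \<otimes> v \<longleftrightarrow> u = twist x \<otimes> v"
  by (simp add: mult_twist[symmetric] m_assoc)

lemma star_eq_twist_mult_iff:
  "x \<in> carrier G \<Longrightarrow> y \<in> carrier G \<Longrightarrow> star y = twist x \<otimes> y \<longleftrightarrow> twist x = twist y"
  using twist_mult[of y] by auto

lemma eq_twist_mult_star_iff: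
  assumes "x \<in> carrier G" "y \<in> carrier G"
  shows "y = twist x \<otimes> star y \<longleftrightarrow> twist x = twist y"
proof -
  have "y = twist x \<otimes> star y \<longleftrightarrow> y = (twist x \<otimes> twist y) \<otimes> y"
    using assms by (simp add: twist_mult[symmetric] m_assoc)
  also have "\<dots> \<longleftrightarrow> twist x \<otimes> twist y = twist y \<otimes> twist y"
    using assms by (simp add: twist_involution)
  also have "\<dots> \<longleftrightarrow> twist x = twist y"
    using assms by simp
  finally show ?thesis .
qed

lemma products_neq_of_twist_neq:
  assumes "x \<in> carrier G" "y \<in> carrier G" "twist x \<noteq> twist y"
  shows "x \<otimes> star y \<noteq> star x \<otimes> y" and "x \<otimes> y \<noteq> star x \<otimes> star y"
  using assms
  by (simp_all add: mult_eq_star_mult_iff star_eq_twist_mult_iff eq_twist_mult_star_iff)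

lemma gmult_star_sum_of_twist_neq:
  assumes "x \<in> carrier G" "y \<in> carrier G" "star x \<noteq> x" "star y \<noteq> y" "twist x \<noteq> twist y"
  shows "gmult G (star_sum x) (star_sum y) z =
    (if x \<otimes> y = z then 1 else if x \<otimes> star y = z then \<sigma> y
     else if star x \<otimes> y = z then \<sigma> x else if star x \<otimes> star y = z then \<sigma> x * \<sigma> y else 0)"
proof -
  have "x \<otimes> y \<noteq> x \<otimes> star y" "x \<otimes> y \<noteq> star x \<otimes> y"
    "x \<otimes> star y \<noteq> star x \<otimes> star y" "star x \<otimes> y \<noteq> star x \<otimes> star y"
    using assms by auto
  then show ?thesis
    using products_neq_of_twist_neq[OF assms(1,2,5)] assms(3,4)
    by (auto simp: gmult_star_sum_star_sum)
qed

end

locale distinct_twists = anticommutative_S +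
  fixes x y
  assumes x_closed [simp]: "x \<in> carrier G" and y_closed [simp]: "y \<in> carrier G"
    and x_nonsym: "star x \<noteq> x" and y_nonsym: "star y \<noteq> y"
    and twists_neq: "twist x \<noteq> twist y"
begin

text \<open>The two chains are the coefficients at z of (x + \<sigma>(x)x*)(y + \<sigma>(y)y*) and of the reverse
  product; they are chains because the four products in each are pairwise distinct.\<close>

lemma coefficient_balance:
  "(if x \<otimes> y = z then 1 else if x \<otimes> star y = z then \<sigma> y
    else if star x \<otimes> y = z then \<sigma> x else if star x \<otimes> star y = z then \<sigma> x * \<sigma> y else 0)
   + (if y \<otimes> x = z then 1 else if y \<otimes> star x = z then \<sigma> x
    else if star y \<otimes> x = z then \<sigma> y else if star y \<otimes> star x = z then \<sigma> y * \<sigma> x else 0) = 0"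
  using S_anticomm[OF star_sum_in_S[OF x_closed x_nonsym] star_sum_in_S[OF y_closed y_nonsym], of z]
    gmult_star_sum_of_twist_neq[OF x_closed y_closed x_nonsym y_nonsym twists_neq]
    gmult_star_sum_of_twist_neq[OF y_closed x_closed y_nonsym x_nonsym not_sym[OF twists_neq]]
  by simp

lemma products_distinct:
  "x \<otimes> y \<noteq> x \<otimes> star y" "x \<otimes> y \<noteq> star x \<otimes> y" "x \<otimes> y \<noteq> star x \<otimes> star y"
  "x \<otimes> star y \<noteq> star x \<otimes> y" "x \<otimes> star y \<noteq> star x \<otimes> star y"
  "star x \<otimes> y \<noteq> star x \<otimes> star y"
  "y \<otimes> x \<noteq> y \<otimes> star x" "y \<otimes> x \<noteq> star y \<otimes> x" "y \<otimes> x \<noteq> star y \<otimes> star x"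
  "y \<otimes> star x \<noteq> star y \<otimes> x" "y \<otimes> star x \<noteq> star y \<otimes> star x"
  "star y \<otimes> x \<noteq> star y \<otimes> star x"
  using products_neq_of_twist_neq[OF x_closed y_closed twists_neq]
    products_neq_of_twist_neq[OF y_closed x_closed not_sym[OF twists_neq]] x_nonsym y_nonsym
  by auto

lemma sigma_units: "\<sigma> x dvd 1" "\<sigma> y dvd 1" "\<sigma> x * \<sigma> y dvd 1"
  using sigma_unit[OF x_closed] sigma_unit[OF y_closed] mult_dvd_mono[of "\<sigma> x" 1 "\<sigma> y" 1]
  by auto

lemma match_at_mult:
  "y \<otimes> star x = x \<otimes> y \<and> \<sigma> x = -1 \<or> star y \<otimes> x = x \<otimes> y \<and> \<sigma> y = -1
   \<or> star y \<otimes> star x = x \<otimes> y \<and> \<sigma> y * \<sigma> x = -1"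
  using coefficient_balance[of "x \<otimes> y"] products_distinct two_neq_zero one_neq_zero
  by (auto simp: add_eq_0_iff split: if_splits)

lemma match_at_mult_star:
  "y \<otimes> x = x \<otimes> star y \<and> \<sigma> y = -1 \<or> y \<otimes> star x = x \<otimes> star y \<and> \<sigma> y = - \<sigma> x
   \<or> star y \<otimes> star x = x \<otimes> star y \<and> \<sigma> x = -1"
  using coefficient_balance[of "x \<otimes> star y"] products_distinct
    unit_double_neq_zero[OF sigma_units(2)] unit_neq_zero[OF sigma_units(2)]
    add_eq_0_iff2[of "\<sigma> y" 1] add_eq_0_iff2[of "\<sigma> y" "\<sigma> x"]
    unit_add_mult_eq_0_iff[OF sigma_units(2), of "\<sigma> x"]
  by (auto split: if_splits)

lemma match_at_star_mult:
  "y \<otimes> x = star x \<otimes> y \<and> \<sigma> x = -1 \<or> star y \<otimes> x = star x \<otimes> y \<and> \<sigma> x = - \<sigma> y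
   \<or> star y \<otimes> star x = star x \<otimes> y \<and> \<sigma> y = -1"
  using coefficient_balance[of "star x \<otimes> y"] products_distinct
    unit_double_neq_zero[OF sigma_units(1)] unit_neq_zero[OF sigma_units(1)]
    add_eq_0_iff2[of "\<sigma> x" 1] add_eq_0_iff2[of "\<sigma> x" "\<sigma> y"]
    unit_add_mult_eq_0_iff[OF sigma_units(1), of "\<sigma> y"]
  by (auto split: if_splits simp: mult.commute)

lemma match_at_star_mult_star:
  "y \<otimes> x = star x \<otimes> star y \<and> \<sigma> x * \<sigma> y = -1 \<or> y \<otimes> star x = star x \<otimes> star y \<and> \<sigma> y = -1
   \<or> star y \<otimes> x = star x \<otimes> star y \<and> \<sigma> x = -1"
  using coefficient_balance[of "star x \<otimes> star y"] products_distinct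
    unit_double_neq_zero[OF sigma_units(3)] unit_neq_zero[OF sigma_units(3)]
    add_eq_0_iff2[of "\<sigma> x * \<sigma> y" 1]
    unit_add_mult_eq_0_iff[OF sigma_units(1), of "\<sigma> y"]
    unit_add_mult_eq_0_iff[OF sigma_units(2), of "\<sigma> x"]
  by (auto split: if_splits simp: mult.commute add.commute)

lemma twist_commute_of_swap_eq:
  assumes "y \<otimes> x = x \<otimes> star y"
  shows "twist x \<otimes> y = y \<otimes> twist x"
proof -
  have xs: "star x = twist x \<otimes> x"
    by (simp add: twist_mult)
  from match_at_star_mult_star show ?thesis
  proof (elim disjE conjE)
    assume "y \<otimes> x = star x \<otimes> star y"
    then show ?thesis
      using assms products_distinct by simp
  next
    assume "y \<otimes> star x = star x \<otimes> star y"
    then show ?thesis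
      using commute_of_eqs[of y "star y" "twist x" x] assms xs by simp
  next
    assume "star y \<otimes> x = star x \<otimes> star y"
    then have "star y = twist x \<otimes> y"
      using left_factor_of_eqs[of y "star y" "star y" "twist x" x x] assms xs by simp
    then show ?thesis
      using star_eq_twist_mult_iff twists_neq by simp
  qed
qed

lemma twist_commute_or_exceptional_of_star_swap_eq:
  assumes "y \<otimes> star x = x \<otimes> star y" and "\<sigma> y = - \<sigma> x"
  shows "twist x \<otimes> y = y \<otimes> twist x \<or> \<sigma> x = -1 \<and> \<sigma> y = 1 \<and> star (y \<otimes> x) \<noteq> y \<otimes> x"
proof -
  have xs: "star x = twist x \<otimes> x"
    by (simp add: twist_mult)
  from match_at_star_mult_star show ?thesis
  proof (elim disjE conjE)
    assume "y \<otimes> x = star x \<otimes> star y"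
    then show ?thesis
      using commute_of_twisted_eqs[of y "star y" "twist x" x] assms(1) xs twist_involution by simp
  next
    assume "y \<otimes> star x = star x \<otimes> star y"
    then show ?thesis
      using assms products_distinct by simp
  next
    assume "star y \<otimes> x = star x \<otimes> star y" and "\<sigma> x = -1"
    then show ?thesis
      using assms(2) products_distinct by (simp add: star_mult)
  qed
qed

lemma twist_commute_or_exceptional_of_star_star_eq:
  assumes "star y \<otimes> star x = x \<otimes> star y" and "\<sigma> x = -1"
  shows "twist x \<otimes> y = y \<otimes> twist x \<or> \<sigma> x = -1 \<and> \<sigma> y = 1 \<and> star (x \<otimes> y) \<noteq> x \<otimes> y"
proof -
  have xs: "star x = twist x \<otimes> x"
    by (simp add: twist_mult)
  from match_at_star_mult_star show ?thesis
  proof (elim disjE conjE)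
    assume "y \<otimes> x = star x \<otimes> star y" and "\<sigma> x * \<sigma> y = -1"
    then show ?thesis
      using assms products_distinct by (simp add: star_mult)
  next
    assume "y \<otimes> star x = star x \<otimes> star y"
    then have "y = twist x \<otimes> star y"
      using left_factor_of_eqs[of "star y" y "star y" "twist x" "star x" x] assms(1) xs by simp
    then show ?thesis
      using eq_twist_mult_star_iff twists_neq by simp
  next
    assume yx: "star y \<otimes> x = star x \<otimes> star y"
    have "y \<otimes> star x = x \<otimes> y"
      using match_at_mult assms(1) yx products_distinct by auto
    moreover have "y \<otimes> x = star x \<otimes> y"
      using match_at_star_mult assms(1) yx products_distinct by auto
    ultimately show ?thesis
      using commute_of_twisted_eqs[of y y "twist x" x] xs twist_involution by simp
  qed
qed

lemma twist_commute_or_exceptional: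
  "twist x \<otimes> y = y \<otimes> twist x \<or>
   \<sigma> x = -1 \<and> \<sigma> y = 1 \<and> (star (x \<otimes> y) \<noteq> x \<otimes> y \<or> star (y \<otimes> x) \<noteq> y \<otimes> x)"
  using match_at_mult_star twist_commute_of_swap_eq twist_commute_or_exceptional_of_star_swap_eq
    twist_commute_or_exceptional_of_star_star_eq
  by blast

end

context anticommutative_S
begin

lemma twist_commute_nonsym_of_sigma_neq_one:
  assumes "x \<in> carrier G" "star x \<noteq> x" "y \<in> carrier G" "star y \<noteq> y" and "\<sigma> y \<noteq> 1"
  shows "twist x \<otimes> y = y \<otimes> twist x"
proof (cases "twist x = twist y")
  case True
  then show ?thesis
    using assms(3) twist_commute_self by simp
next
  case False
  interpret distinct_twists G star \<sigma> x y
    using assms False by unfold_locales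
  show ?thesis
    using twist_commute_or_exceptional assms(5) by blast
qed

lemma twist_commute_nonsym:
  assumes x: "x \<in> carrier G" "star x \<noteq> x" and y: "y \<in> carrier G" "star y \<noteq> y"
  shows "twist x \<otimes> y = y \<otimes> twist x"
proof (cases "twist x = twist y")
  case True
  then show ?thesis
    using y twist_commute_self by simp
next
  case False
  interpret distinct_twists G star \<sigma> x y
    using x y False by unfold_locales
  have c: "twist x \<in> carrier G" "twist x \<otimes> x = x \<otimes> twist x"
    using x twist_commute_self by auto
  have "\<sigma> (x \<otimes> y) \<noteq> 1" "\<sigma> (y \<otimes> x) \<noteq> 1" if "\<sigma> x = -1" "\<sigma> y = 1"
    using that x y minus_one_neq_one by (simp_all add: sigma_mult)
  then show ?thesis
    using twist_commute_or_exceptional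
      twist_commute_nonsym_of_sigma_neq_one[OF x, of "x \<otimes> y"]
      twist_commute_nonsym_of_sigma_neq_one[OF x, of "y \<otimes> x"]
      commute_of_commute_mult_left[OF c(1) x(1) y(1) c(2)]
      commute_of_commute_mult_right[OF c(1) x(1) y(1) c(2)]
    by (auto simp: m_assoc)
qed

lemma twist_commute:
  assumes x: "x \<in> carrier G" and y: "y \<in> carrier G"
  shows "twist x \<otimes> y = y \<otimes> twist x"
proof (cases "star x = x")
  case True
  then show ?thesis
    using x y by (simp add: twist_eq_one_iff[THEN iffD2])
next
  case nonsym: False
  have c: "twist x \<in> carrier G" "twist x \<otimes> x = x \<otimes> twist x"
    using x twist_commute_self by auto
  consider "star y \<noteq> y" | "star (x \<otimes> y) \<noteq> x \<otimes> y" | "star (y \<otimes> x) \<noteq> y \<otimes> x"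
    | "star y = y" "star (x \<otimes> y) = x \<otimes> y" "star (y \<otimes> x) = y \<otimes> x"
    by blast
  then show ?thesis
  proof cases
    case 1
    then show ?thesis
      using twist_commute_nonsym x y nonsym by blast
  next
    case 2
    then show ?thesis
      using twist_commute_nonsym[OF x nonsym, of "x \<otimes> y"] x y
        commute_of_commute_mult_left[OF c(1) x y c(2)] by (simp add: m_assoc)
  next
    case 3
    then show ?thesis
      using twist_commute_nonsym[OF x nonsym, of "y \<otimes> x"] x y
        commute_of_commute_mult_right[OF c(1) x y c(2)] by (simp add: m_assoc)
  next
    case 4
    then have "y \<otimes> star x = x \<otimes> y" and "star x \<otimes> y = y \<otimes> x"
      using x y by (simp_all add: star_mult)
    then show ?thesis
      using commute_of_twisted_eqs[OF y y c(1) x twist_involution[OF x]] x y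
      by (simp add: twist_mult)
  qed
qed

lemma twist_central: "x \<in> carrier G \<Longrightarrow> twist x \<in> group_center G"
  by (simp add: group_center_def twist_commute)

lemma twist_mult_eq:
  assumes x: "x \<in> carrier G" and y: "y \<in> carrier G"
  shows "twist (x \<otimes> y) = twist x \<otimes> twist y \<otimes> gcomm G x y"
proof -
  define c d e k where "c = twist x" and "d = twist y" and "e = twist (x \<otimes> y)" and "k = gcomm G x y"
  have car: "c \<in> carrier G" "d \<in> carrier G" "e \<in> carrier G" "k \<in> carrier G"
    using x y by (simp_all add: c_def d_def e_def k_def)
  have central: "c \<in> group_center G" "d \<in> group_center G" "e \<in> group_center G"
    "c \<otimes> d \<in> group_center G"
    using x y twist_central group_center_mult by (simp_all add: c_def d_def e_def)
  have inv: "e \<otimes> e = \<one>" "(c \<otimes> d) \<otimes> (c \<otimes> d) = \<one>"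
    using x y twist_involution central_involution_mult[OF central(1,2)]
    by (simp_all add: c_def d_def e_def)
  have "e \<otimes> (x \<otimes> y) = star y \<otimes> star x"
    using x y by (simp add: e_def twist_mult star_mult)
  also have "\<dots> = (d \<otimes> y) \<otimes> c \<otimes> x"
    using x y by (simp add: c_def d_def twist_mult m_assoc)
  also have "\<dots> = (c \<otimes> d) \<otimes> (y \<otimes> x)"
    using car x y group_center_commute[OF central(1), of "d \<otimes> y"] by (simp add: m_assoc[symmetric])
  finally have "e \<otimes> ((y \<otimes> x) \<otimes> k) = (c \<otimes> d) \<otimes> (y \<otimes> x)"
    using x y by (simp add: k_def mult_gcomm)
  then have "(y \<otimes> x) \<otimes> (e \<otimes> k) = (y \<otimes> x) \<otimes> (c \<otimes> d)"
    using car x y group_center_commute[OF central(3), of "y \<otimes> x"]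
      group_center_commute[OF central(4), of "y \<otimes> x"]
    by (simp add: m_assoc[symmetric])
  then have ek: "e \<otimes> k = c \<otimes> d"
    using car x y by simp
  then have "e \<otimes> (c \<otimes> d) = (e \<otimes> e) \<otimes> k"
    using car by (simp add: m_assoc)
  then have "k = e \<otimes> (c \<otimes> d)"
    using car inv(1) by simp
  then have "k \<otimes> k = \<one>"
    using central_involution_mult[OF central(3,4) inv] by simp
  then have "e = (e \<otimes> k) \<otimes> k"
    using car by (simp add: m_assoc)
  then show ?thesis
    using ek by (simp add: c_def d_def e_def k_def)
qed


lemma twist_inv:
  assumes y: "y \<in> carrier G"
  shows "twist (inv y) = twist y"
proof -
  have "twist (inv y) = inv (star y) \<otimes> y"
    using y by (simp add: twist_def star_inv)
  also have "\<dots> = inv (twist y \<otimes> y) \<otimes> y"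
    using y by (simp add: twist_mult)
  also have "\<dots> = inv y \<otimes> (twist y \<otimes> y)"
    using y group_center_commute[OF twist_central[OF y], of "inv y"]
    by (simp add: inv_mult_group inv_twist m_assoc)
  also have "\<dots> = twist y"
    using y twist_commute[OF y y] by (simp add: m_assoc[symmetric])
  finally show ?thesis .
qed

lemma twist_mult_of_gcomm_eq_twist:
  assumes "x \<in> carrier G" "y \<in> carrier G"
  shows "gcomm G x y = twist x \<Longrightarrow> twist (x \<otimes> y) = twist y"
    and "gcomm G x y = twist y \<Longrightarrow> twist (x \<otimes> y) = twist x"
proof -
  show "twist (x \<otimes> y) = twist y" if "gcomm G x y = twist x"
    using assms that twist_mult_eq[OF assms] twist_involution twist_commute[of x "twist y"]
    by (simp add: m_assoc)
  show "twist (x \<otimes> y) = twist x" if "gcomm G x y = twist y"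
    using assms that twist_mult_eq[OF assms] twist_involution twist_commute[of y "twist x"]
    by (simp add: m_assoc)
qed

end

context distinct_twists
begin

lemma twist_mult_of_noncommuting:
  assumes "x \<otimes> y \<noteq> y \<otimes> x"
  shows "twist (x \<otimes> y) = twist x \<or> twist (x \<otimes> y) = twist y"
proof -
  have "gcomm G x y = twist x" if "y \<otimes> star x = x \<otimes> y"
    using that by (intro gcomm_eqI) (simp_all add: mult_twist m_assoc)
  moreover have "gcomm G x y = twist y" if "star y \<otimes> x = x \<otimes> y"
  proof (rule gcomm_eqI)
    show "y \<otimes> x \<otimes> twist y = x \<otimes> y"
      using that twist_commute[of y "y \<otimes> x"] by (simp add: twist_mult[symmetric] m_assoc)
  qed simp_all
  moreover have "gcomm G x y = twist x" if "star y \<otimes> star x = x \<otimes> y" "\<sigma> y * \<sigma> x = -1"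
  proof (rule gcomm_eqI)
    have "\<sigma> (x \<otimes> y) = -1"
      using that(2) by (simp add: sigma_mult mult.commute)
    then have "2 * (1 - \<sigma> (x \<otimes> y)) = 0"
      using four_eq_zero[OF x_closed x_nonsym] by simp
    then have "x \<otimes> (x \<otimes> y) = x \<otimes> y \<otimes> x \<or> star x \<otimes> (x \<otimes> y) = x \<otimes> y \<otimes> x"
      using sym_commute_or_star_commute[OF x_closed x_nonsym, of "x \<otimes> y"] that(1)
      by (simp add: star_mult)
    then have "x \<otimes> (twist x \<otimes> (x \<otimes> y)) = x \<otimes> (y \<otimes> x)"
      using assms twist_commute[of x x] by (auto simp: twist_mult[symmetric] m_assoc)
    then have "twist x \<otimes> (x \<otimes> y) = y \<otimes> x"
      by simp
    then have "twist x \<otimes> (twist x \<otimes> (x \<otimes> y)) = twist x \<otimes> (y \<otimes> x)"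
      by simp
    then show "y \<otimes> x \<otimes> twist x = x \<otimes> y"
      using twist_involution[of x] twist_commute[of x "y \<otimes> x"] by (simp add: m_assoc[symmetric])
  qed simp_all
  ultimately show ?thesis
    using match_at_mult twist_mult_of_gcomm_eq_twist by auto
qed

end

context anticommutative_S
begin

lemma twist_mult_mem_nonsym:
  assumes "x \<in> carrier G" "star x \<noteq> x" "y \<in> carrier G" "star y \<noteq> y" and "x \<otimes> y \<noteq> y \<otimes> x"
  shows "twist (x \<otimes> y) \<in> {twist x, twist y, gcomm G x y}"
proof (cases "twist x = twist y")
  case True
  then show ?thesis
    using assms twist_mult_eq[of x y] twist_involution[of x] by simp
next
  case False
  interpret distinct_twists G star \<sigma> x y
    using assms False by unfold_locales
  show ?thesis
    using twist_mult_of_noncommuting assms(5) by blast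
qed

lemma star_mult_eq_of_left_sym:
  assumes x: "x \<in> carrier G" "star x = x" and y: "y \<in> carrier G" "star y \<noteq> y"
    and nc: "x \<otimes> y \<noteq> y \<otimes> x"
  shows "star (x \<otimes> y) = x \<otimes> y"
proof (rule ccontr)
  assume xy: "star (x \<otimes> y) \<noteq> x \<otimes> y"
  have "inv y \<otimes> (x \<otimes> y) \<noteq> x"
  proof
    assume "inv y \<otimes> (x \<otimes> y) = x"
    then have "y \<otimes> (inv y \<otimes> (x \<otimes> y)) = y \<otimes> x"
      by simp
    then show False
      using x y nc by simp
  qed
  then have "(x \<otimes> y) \<otimes> inv y \<noteq> inv y \<otimes> (x \<otimes> y)"
    using x y by (simp add: m_assoc)
  then have "twist ((x \<otimes> y) \<otimes> inv y) \<in> {twist (x \<otimes> y), twist (inv y), gcomm G (x \<otimes> y) (inv y)}"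
    using twist_mult_mem_nonsym[of "x \<otimes> y" "inv y"] x y xy by (simp add: star_inv_eq_iff)
  moreover have "twist ((x \<otimes> y) \<otimes> inv y) = \<one>"
    using x y by (simp add: m_assoc twist_eq_one_iff)
  moreover have "twist (x \<otimes> y) \<noteq> \<one>" "twist (inv y) \<noteq> \<one>" "gcomm G (x \<otimes> y) (inv y) \<noteq> \<one>"
    using x y xy \<open>(x \<otimes> y) \<otimes> inv y \<noteq> _\<close> by (simp_all add: twist_inv twist_eq_one_iff gcomm_eq_one_iff)
  ultimately show False
    by auto
qed

lemma star_mult_eq_of_right_sym:
  assumes x: "x \<in> carrier G" "star x \<noteq> x" and y: "y \<in> carrier G" "star y = y"
    and nc: "x \<otimes> y \<noteq> y \<otimes> x"
  shows "star (x \<otimes> y) = x \<otimes> y"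
proof (rule ccontr)
  assume xy: "star (x \<otimes> y) \<noteq> x \<otimes> y"
  have "(x \<otimes> y) \<otimes> inv x \<noteq> y"
  proof
    assume "(x \<otimes> y) \<otimes> inv x = y"
    then have "(x \<otimes> y) \<otimes> inv x \<otimes> x = y \<otimes> x"
      by simp
    then show False
      using x y nc by (simp add: m_assoc)
  qed
  then have "inv x \<otimes> (x \<otimes> y) \<noteq> (x \<otimes> y) \<otimes> inv x"
    using x y by simp
  then have "twist (inv x \<otimes> (x \<otimes> y)) \<in> {twist (inv x), twist (x \<otimes> y), gcomm G (inv x) (x \<otimes> y)}"
    using twist_mult_mem_nonsym[of "inv x" "x \<otimes> y"] x y xy by (simp add: star_inv_eq_iff)
  moreover have "twist (inv x \<otimes> (x \<otimes> y)) = \<one>"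
    using x y by (simp add: twist_eq_one_iff)
  moreover have "twist (inv x) \<noteq> \<one>" "twist (x \<otimes> y) \<noteq> \<one>" "gcomm G (inv x) (x \<otimes> y) \<noteq> \<one>"
    using x y xy \<open>inv x \<otimes> (x \<otimes> y) \<noteq> _\<close>
    by (simp_all add: twist_inv twist_eq_one_iff gcomm_eq_one_iff)
  ultimately show False
    by auto
qed

lemma twist_mult_mem:
  assumes x: "x \<in> carrier G" and y: "y \<in> carrier G" and "gcomm G x y \<noteq> \<one>"
  shows "twist (x \<otimes> y) \<in> {twist x, twist y, gcomm G x y}"
proof -
  have nc: "x \<otimes> y \<noteq> y \<otimes> x"
    using assms gcomm_eq_one_iff by simp
  consider "star x \<noteq> x" "star y \<noteq> y" | "star x = x" "star y = y" | "star x = x" "star y \<noteq> y"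
    | "star x \<noteq> x" "star y = y"
    by blast
  then show ?thesis
  proof cases
    case 1
    then show ?thesis
      using twist_mult_mem_nonsym x y nc by blast
  next
    case 2
    then show ?thesis
      using x y twist_mult_eq[OF x y] by (simp add: twist_eq_one_iff[THEN iffD2])
  next
    case 3
    then show ?thesis
      using star_mult_eq_of_left_sym[OF x _ y _ nc] x y by (simp add: twist_eq_one_iff[THEN iffD2])
  next
    case 4
    then show ?thesis
      using star_mult_eq_of_right_sym[OF x _ y _ nc] x y by (simp add: twist_eq_one_iff[THEN iffD2])
  qed
qed

end

theorem lemma3p12:
  fixes G :: "('g, 'b) monoid_scheme"
    and star :: "'g \<Rightarrow> 'g"
    and \<sigma> :: "'g \<Rightarrow> 'r::comm_ring_1"
    and c :: "'g \<Rightarrow> 'g"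
  assumes grp: "group G"
    and char: "CHAR('r) \<noteq> 2"
    and star_closed: "\<forall>x\<in>carrier G. star x \<in> carrier G"
    and star_anti: "\<forall>x\<in>carrier G. \<forall>y\<in>carrier G. star (x \<otimes>\<^bsub>G\<^esub> y) = star y \<otimes>\<^bsub>G\<^esub> star x"
    and star_invol: "\<forall>x\<in>carrier G. star (star x) = x"
    and sigma_hom: "\<forall>x\<in>carrier G. \<forall>y\<in>carrier G. \<sigma> (x \<otimes>\<^bsub>G\<^esub> y) = \<sigma> x * \<sigma> y"
    and sigma_unit: "\<forall>x\<in>carrier G. \<sigma> x dvd 1"
    and sigma_nontriv: "\<exists>x\<in>carrier G. \<sigma> x \<noteq> 1"
    and sigma_compat: "\<forall>x\<in>carrier G. \<sigma> (x \<otimes>\<^bsub>G\<^esub> star x) = 1"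
    and anticomm: "anticommutative G (S_module G star \<sigma>)"
    and c_def: "\<forall>x\<in>carrier G. c x = star x \<otimes>\<^bsub>G\<^esub> inv\<^bsub>G\<^esub> x"
  shows "(\<forall>x\<in>carrier G. star x = c x \<otimes>\<^bsub>G\<^esub> x \<and> c x \<in> sym_elems G star
            \<and> c x \<in> group_center G \<and> c x \<otimes>\<^bsub>G\<^esub> c x = \<one>\<^bsub>G\<^esub>)
       \<and> (\<forall>x\<in>carrier G. \<forall>y\<in>carrier G. c (x \<otimes>\<^bsub>G\<^esub> y) = c x \<otimes>\<^bsub>G\<^esub> c y \<otimes>\<^bsub>G\<^esub> gcomm G x y)
       \<and> (\<forall>x\<in>carrier G. \<forall>y\<in>carrier G. gcomm G x y \<noteq> \<one>\<^bsub>G\<^esub> \<longrightarrow>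
            c (x \<otimes>\<^bsub>G\<^esub> y) \<in> {c x, c y, gcomm G x y})"
proof -
  have "(1::'r) \<noteq> 0"
  proof
    assume "(1::'r) = 0"
    then have "a = 1" for a :: 'r
      by (metis mult_1_right mult_zero_right)
    then show False
      using sigma_nontriv by blast
  qed
  then interpret anticommutative_S G star \<sigma>
    using grp two_neq_zero_if_CHAR_neq_2[OF char] assms(3-7,10)
    by (intro anticommutative_S.intro group_involution.intro group_involution_axioms.intro
        anticommutative_S_axioms.intro) auto
  have c_twist: "c x = twist x" if "x \<in> carrier G" for x
    using c_def that by (simp add: twist_def)
  show ?thesis
    using twist_mult star_twist twist_central twist_involution twist_mult_eq twist_mult_mem
    by (simp add: c_twist sym_elems_def)
qed

end
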